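(* Let $n,d\ge 1$, let $X\in\mathbb{R}^{d\times n}$ have columns $x_1,\dots,x_n\in\mathbb{R}^d$, let $y=(y_1,\dots,y_n)^T\in\{-1,+1\}^n$, and set $Z=X\,\mathrm{diag}(y)\in\mathbb{R}^{d\times n}$. Let $q>0$, $C>0$, and let $e\in\mathbb{R}^n$ be a vector with all entries positive and $\|e\|_\infty=1$. Define $\theta_q:\mathbb{R}\to\mathbb{R}\cup\{+\infty\}$ by $\theta_q(t)=t^{-q}$ if $t>0$ and $\theta_q(t)=+\infty$ if $t\le 0$. Consider the primal problem $$\min\Big\{\Phi(r,\xi):=\sum_{i=1}^n\theta_q(r_i)+C\langle e,\xi\rangle \;\Big|\; Z^Tw+\beta y+\xi-r=0,\ \|w\|\le 1,\ \xi\ge 0,\ r,\xi\in\mathbb{R}^n,\ w\in\mathbb{R}^d,\ \beta\in\mathbb{R}\Big\}.$$ Let $\kappa=\frac{q+1}{q}\,q^{\frac{1}{q+1}}$. Then the Lagrangian dual of this problem (formed with a multiplier $\alpha\in\mathbb{R}^n$ for the equality constraint, $\eta\in\mathbb{R}^n_{+}$ for $\xi\ge0$, and $\lambda\ge 0$ for the constraint $\tfrac12(\|w\|^2-1)\le 0$) is $$-\min_{\alpha\in\mathbb{R}^n}\Big\{\Psi(\alpha):=\|Z\alpha\|-\kappa\sum_{i=1}^n\alpha_i^{\frac{q}{q+1}}\;\Big|\;0\le\alpha\le Ce,\ \langle y,\alpha\rangle=0\Big\}.$$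
   Context: $\|\cdot\|$ denotes the Euclidean norm and $\langle\cdot,\cdot\rangle$ the standard inner product; vector inequalities are componentwise. *)

theory Defs
  imports "HOL-Analysis.Analysis" "HOL-Library.Extended_Real"
begin

definition theta :: "real \<Rightarrow> real \<Rightarrow> ereal" where
  "theta q t = (if t > 0 then ereal (t powr (-q)) else \<infinity>)"

definition diagm :: "real^'n \<Rightarrow> real^'n^'n" where
  "diagm y = (\<chi> i j. if i = j then y $ i else 0)"

definition Zmat :: "real^'n^'d \<Rightarrow> real^'n \<Rightarrow> real^'n^'d" where
  "Zmat X y = X ** diagm y"

definition kappa :: "real \<Rightarrow> real" where
  "kappa q = (q + 1) / q * q powr (1 / (q + 1))"

definition Phi :: "real \<Rightarrow> real \<Rightarrow> real^'n \<Rightarrow> real^'n \<Rightarrow> real^'n \<Rightarrow> ereal" where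
  "Phi q C e r \<xi> = (\<Sum>i\<in>UNIV. theta q (r $ i)) + ereal (C * (e \<bullet> \<xi>))"

definition lagrangian ::
  "real \<Rightarrow> real \<Rightarrow> real^'n \<Rightarrow> real^'n^'d \<Rightarrow> real^'n \<Rightarrow>
   real^'n \<Rightarrow> real^'n \<Rightarrow> real^'d \<Rightarrow> real \<Rightarrow>
   real^'n \<Rightarrow> real^'n \<Rightarrow> real \<Rightarrow> ereal" where
  "lagrangian q C e X y r \<xi> w \<beta> \<alpha> \<eta> lam =
     Phi q C e r \<xi>
     + ereal (- (\<alpha> \<bullet> (transpose (Zmat X y) *v w + \<beta> *\<^sub>R y + \<xi> - r))
              - \<eta> \<bullet> \<xi> + lam * ((norm w ^ 2 - 1) / 2))"

definition dual_fun ::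
  "real \<Rightarrow> real \<Rightarrow> real^'n \<Rightarrow> real^'n^'d \<Rightarrow> real^'n \<Rightarrow>
   real^'n \<Rightarrow> real^'n \<Rightarrow> real \<Rightarrow> ereal" where
  "dual_fun q C e X y \<alpha> \<eta> lam =
     (INF p \<in> (UNIV :: ((real^'n) \<times> (real^'n) \<times> (real^'d) \<times> real) set).
        lagrangian q C e X y (fst p) (fst (snd p)) (fst (snd (snd p))) (snd (snd (snd p))) \<alpha> \<eta> lam)"

definition Psi :: "real \<Rightarrow> real^'n^'d \<Rightarrow> real^'n \<Rightarrow> real^'n \<Rightarrow> real" where
  "Psi q X y \<alpha> = norm (Zmat X y *v \<alpha>) - kappa q * (\<Sum>i\<in>UNIV. (\<alpha> $ i) powr (q / (q + 1)))"

definition dual_feasible :: "real \<Rightarrow> real^'n \<Rightarrow> real^'n \<Rightarrow> real^'n \<Rightarrow> bool" where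
  "dual_feasible C e y \<alpha> \<longleftrightarrow> (\<forall>i. 0 \<le> \<alpha> $ i \<and> \<alpha> $ i \<le> C * e $ i) \<and> y \<bullet> \<alpha> = 0"

end

theory Submission
  imports Defs
begin

text \<open>The dual function is computed by minimizing the Lagrangian separately in each primal
  variable. It is linear in \<open>\<beta>\<close> and \<open>\<xi>\<close>, which forces \<open>\<langle>y,\<alpha>\<rangle> = 0\<close> and \<open>\<eta> = Ce - \<alpha>\<close>
  (so \<open>\<eta> \<ge> 0\<close> becomes \<open>\<alpha> \<le> Ce\<close>). In each \<open>r\<^sub>i\<close> it is \<open>t\<^sup>-\<^sup>q + \<alpha>\<^sub>i t\<close>, whose infimum over
  \<open>t > 0\<close> is \<open>\<kappa> \<alpha>\<^sub>i\<^bsup>q/(q+1)\<^esup>\<close> by the weighted AM-GM inequality when \<open>\<alpha>\<^sub>i \<ge> 0\<close>, and \<open>-\<infinity>\<close> otherwise.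
  In \<open>w\<close> it is \<open>-\<langle>Z\<alpha>,w\<rangle> + \<lambda>(\<parallel>w\<parallel>\<^sup>2 - 1)/2\<close>, with infimum \<open>-(\<parallel>Z\<alpha>\<parallel>\<^sup>2/\<lambda> + \<lambda>)/2\<close>; maximizing over
  \<open>\<lambda> \<ge> 0\<close> gives \<open>-\<parallel>Z\<alpha>\<parallel>\<close>, attained at \<open>\<lambda> = \<parallel>Z\<alpha>\<parallel>\<close>.\<close>

lemma kappa_mult_powr_eq:
  assumes q: "q > 0" and a: "a \<ge> 0"
  shows "kappa q * a powr (q/(q+1)) = (q+1) * (a/q) powr (q/(q+1))"
proof -
  have "q powr (1/(q+1)) / q = q powr (1/(q+1) - 1)" using q by (simp add: powr_diff)
  also have "1/(q+1) - 1 = - (q/(q+1))" using q by (simp add: field_simps)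
  finally have k: "kappa q = (q+1) / q powr (q/(q+1))"
    unfolding kappa_def using q by (simp add: powr_minus divide_inverse mult.commute)
  have "(a/q) powr (q/(q+1)) = a powr (q/(q+1)) / q powr (q/(q+1))"
    using q a by (simp add: powr_divide)
  then show ?thesis using k by simp
qed

lemma kappa_mult_powr_le:
  assumes q: "q > 0" and a: "a \<ge> 0" and t: "t > 0"
  shows "kappa q * a powr (q/(q+1)) \<le> t powr (-q) + a*t"
proof (cases "a = 0")
  case True then show ?thesis using q by simp
next
  case False
  then have a: "a > 0" using a by simp
  let ?A = "t powr (-q)" and ?B = "a*t/q"
  have young: "?A powr (1/(q+1)) * ?B powr (q/(q+1)) \<le> (1/(q+1))*?A + (q/(q+1))*?B"
    by (rule Youngs_inequality_0) (use q a t in \<open>auto simp: field_simps\<close>)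
  have "?A powr (1/(q+1)) = t powr (-(q/(q+1)))" using t by (simp add: powr_powr)
  moreover have "?B powr (q/(q+1)) = (a/q) powr (q/(q+1)) * t powr (q/(q+1))"
    using a q t by (simp add: powr_mult[symmetric])
  ultimately have "?A powr (1/(q+1)) * ?B powr (q/(q+1)) = (a/q) powr (q/(q+1))"
    using t by (simp add: powr_minus field_simps)
  with young have "(q+1)*(a/q) powr (q/(q+1)) \<le> (q+1)*((1/(q+1))*?A + (q/(q+1))*?B)"
    using q by (intro mult_left_mono) auto
  also have "\<dots> = (q+1)*((1/(q+1))*?A) + (q+1)*((q/(q+1))*?B)" by (rule distrib_left)
  also have "(q+1)*((1/(q+1))*?A) = ?A" using q by simp
  also have "(q+1)*((q/(q+1))*?B) = a*t" using q by (simp add: divide_simps)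
  finally show ?thesis using kappa_mult_powr_eq[OF q] a by simp
qed

lemma kappa_mult_powr_attained:
  assumes q: "q > 0" and a: "a > 0"
  shows "((q/a) powr (1/(q+1))) powr (-q) + a * (q/a) powr (1/(q+1)) = kappa q * a powr (q/(q+1))"
proof -
  define u where "u = a/q"
  have u: "u > 0" using q a by (simp add: u_def)
  have first: "((q/a) powr (1/(q+1))) powr (-q) = u powr (q/(q+1))"
    using q a by (simp add: u_def powr_powr powr_divide powr_minus field_simps)
  have "a * (q/a) powr (1/(q+1)) = q * (u * u powr (-(1/(q+1))))"
    using q a by (simp add: u_def powr_divide powr_minus_divide)
  also have "u * u powr (-(1/(q+1))) = u powr (1 + (-(1/(q+1))))"
    using u by (simp add: powr_add del: diff_minus_eq_add add_uminus_conv_diff)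
  also have "1 + (-(1/(q+1))) = q/(q+1)" using q by (simp add: field_simps)
  finally have second: "a * (q/a) powr (1/(q+1)) = q * u powr (q/(q+1))" .
  show ?thesis using first second kappa_mult_powr_eq[OF q, of a] a by (simp add: u_def algebra_simps)
qed

lemma ex_powr_add_mult_le_kappa:
  assumes q: "q > 0" and a: "a \<ge> 0" and d: "d > 0"
  shows "\<exists>t>0. t powr (-q) + a*t \<le> kappa q * a powr (q/(q+1)) + d"
proof (cases "a = 0")
  case True
  have "(d powr (-1/q)) powr (-q) = d" using d q by (simp add: powr_powr)
  then show ?thesis using True d by (intro exI[of _ "d powr (-1/q)"]) auto
next
  case False
  then show ?thesis using kappa_mult_powr_attained[OF q, of a] a d q
    by (intro exI[of _ "(q/a) powr (1/(q+1))"]) auto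
qed

lemma neg_norm_le_inner_penalty:
  fixes v w :: "'a::real_inner"
  shows "- norm v \<le> - (v \<bullet> w) + norm v * ((norm w ^ 2 - 1) / 2)"
proof -
  have "v \<bullet> w \<le> norm v * norm w" by (rule norm_cauchy_schwarz)
  moreover have "0 \<le> norm v * ((norm w - 1)^2)" by simp
  ultimately show ?thesis by (simp add: power2_diff algebra_simps)
qed

lemma ex_inner_penalty_le_neg_norm:
  fixes v :: "'a::real_inner"
  assumes "lam \<ge> 0" and "lam = 0 \<longrightarrow> v = 0"
  shows "\<exists>w. - (v \<bullet> w) + lam * ((norm w ^ 2 - 1) / 2) \<le> - norm v"
proof (cases "lam = 0")
  case True then show ?thesis using assms by (intro exI[of _ 0]) simp
next
  case False
  then have l: "lam > 0" using assms by simp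
  have "- (v \<bullet> (v /\<^sub>R lam)) + lam * ((norm (v /\<^sub>R lam) ^ 2 - 1) / 2)
        = - (norm v ^ 2 + lam ^ 2) / (2*lam)"
    using l by (simp add: power2_norm_eq_inner[symmetric] power_divide field_simps power2_eq_square)
  also have "\<dots> \<le> - norm v"
  proof -
    have "2*lam*norm v \<le> norm v ^ 2 + lam ^ 2"
      using sum_squares_ge_zero by (smt (verit) power2_diff zero_le_power2)
    then show ?thesis using l by (simp add: field_simps)
  qed
  finally show ?thesis by blast
qed

lemma inner_transpose_mult:
  fixes Z :: "real^'n^'d"
  shows "\<alpha> \<bullet> (transpose Z *v w) = (Z *v \<alpha>) \<bullet> w"
  using adjoint_works[of "\<lambda>x. Z *v x" \<alpha> w] unfolding adjoint_matrix
  by (simp del: transpose_matrix_vector)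

lemma SUP_Times_eq:
  fixes f :: "'a \<Rightarrow> 'b \<Rightarrow> 'c::complete_lattice"
  shows "(SUP p\<in>A \<times> B. f (fst p) (snd p)) = (SUP a\<in>A. SUP b\<in>B. f a b)"
proof (rule antisym)
  show "(SUP p\<in>A \<times> B. f (fst p) (snd p)) \<le> (SUP a\<in>A. SUP b\<in>B. f a b)"
    by (intro SUP_least) (auto intro!: SUP_upper2)
  show "(SUP a\<in>A. SUP b\<in>B. f a b) \<le> (SUP p\<in>A \<times> B. f (fst p) (snd p))"
    by (intro SUP_least) (auto intro: SUP_upper2)
qed

lemma SUP_if_bot_eq:
  fixes f :: "'a \<Rightarrow> 'c::complete_lattice"
  shows "(SUP x\<in>A. if P x then f x else bot) = (SUP x\<in>{x\<in>A. P x}. f x)"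
proof (rule antisym)
  show "(SUP x\<in>A. if P x then f x else bot) \<le> (SUP x\<in>{x\<in>A. P x}. f x)"
    by (intro SUP_least) (auto intro: SUP_upper)
  show "(SUP x\<in>{x\<in>A. P x}. f x) \<le> (SUP x\<in>A. if P x then f x else bot)"
  proof (intro SUP_least)
    fix x assume x: "x \<in> {x\<in>A. P x}"
    then have "f x = (if P x then f x else bot)" by simp
    also have "\<dots> \<le> (SUP x\<in>A. if P x then f x else bot)" using x by (intro SUP_upper) simp
    finally show "f x \<le> (SUP x\<in>A. if P x then f x else bot)" .
  qed
qed

text \<open>The Lagrangian on \<open>r > 0\<close>, regrouped by primal variable.\<close>

definition lagrangian_real :: "real \<Rightarrow> real \<Rightarrow> real^'n \<Rightarrow> real^'n^'d \<Rightarrow> real^'n \<Rightarrow>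
   real^'n \<Rightarrow> real^'n \<Rightarrow> real^'d \<Rightarrow> real \<Rightarrow> real^'n \<Rightarrow> real^'n \<Rightarrow> real \<Rightarrow> real" where
  "lagrangian_real q C e X y r \<xi> w \<beta> \<alpha> \<eta> lam =
     (\<Sum>i\<in>UNIV. r$i powr (-q) + \<alpha>$i * r$i) + (\<Sum>i\<in>UNIV. (C * e$i - \<alpha>$i - \<eta>$i) * \<xi>$i)
     - \<beta> * (y \<bullet> \<alpha>) - (Zmat X y *v \<alpha>) \<bullet> w + lam * ((norm w ^ 2 - 1) / 2)"

lemma lagrangian_eq_real:
  assumes "\<forall>i. r$i > 0"
  shows "lagrangian q C e X y r \<xi> w \<beta> \<alpha> \<eta> lam = ereal (lagrangian_real q C e X y r \<xi> w \<beta> \<alpha> \<eta> lam)"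
proof -
  have theta_sum: "(\<Sum>i\<in>UNIV. theta q (r$i)) = ereal (\<Sum>i\<in>UNIV. r$i powr (-q))"
    using assms by (simp add: theta_def)
  have constraint: "\<alpha> \<bullet> (transpose (Zmat X y) *v w + \<beta> *\<^sub>R y + \<xi> - r)
     = (Zmat X y *v \<alpha>) \<bullet> w + \<beta> * (y \<bullet> \<alpha>) + \<alpha> \<bullet> \<xi> - \<alpha> \<bullet> r"
    by (simp only: inner_add_right inner_diff_right inner_transpose_mult inner_scaleR_right
        inner_commute[of y])
  have "C * (e \<bullet> \<xi>) - (\<alpha> \<bullet> (transpose (Zmat X y) *v w + \<beta> *\<^sub>R y + \<xi> - r)) - \<eta> \<bullet> \<xi>
     = (\<Sum>i\<in>UNIV. \<alpha>$i * r$i) + (\<Sum>i\<in>UNIV. (C * e$i - \<alpha>$i - \<eta>$i) * \<xi>$i)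
       - \<beta> * (y \<bullet> \<alpha>) - (Zmat X y *v \<alpha>) \<bullet> w"
    unfolding constraint by (simp add: inner_vec_def sum_distrib_left sum_subtractf[symmetric] sum.distrib[symmetric]
        algebra_simps)
  then show ?thesis
    unfolding lagrangian_def Phi_def lagrangian_real_def theta_sum by (simp add: sum.distrib algebra_simps)
qed

lemma lagrangian_eq_PInfty:
  assumes "r$i \<le> 0"
  shows "lagrangian q C e X y r \<xi> w \<beta> \<alpha> \<eta> lam = \<infinity>"
proof -
  have "\<exists>i\<in>UNIV. theta q (r$i) = \<infinity>" using assms by (intro bexI[of _ i]) (auto simp: theta_def)
  then have "(\<Sum>i\<in>UNIV. theta q (r$i)) = \<infinity>" unfolding sum_Pinfty by simp
  then show ?thesis unfolding lagrangian_def Phi_def by simp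
qed

lemma dual_fun_le_lagrangian_real:
  assumes "\<forall>i. r$i > 0"
  shows "dual_fun q C e X y \<alpha> \<eta> lam \<le> ereal (lagrangian_real q C e X y r \<xi> w \<beta> \<alpha> \<eta> lam)"
  unfolding dual_fun_def lagrangian_eq_real[OF assms, symmetric]
  by (rule INF_lower2[of "(r, \<xi>, w, \<beta>)"]) auto

lemma dual_fun_eq_MInfty_if_unbounded:
  assumes "\<And>B. \<exists>r \<xi> w \<beta>. (\<forall>i. r$i > 0) \<and> lagrangian_real q C e X y r \<xi> w \<beta> \<alpha> \<eta> lam \<le> B"
  shows "dual_fun q C e X y \<alpha> \<eta> lam = -\<infinity>"
proof (rule ereal_bot)
  fix B
  from assms obtain r \<xi> w \<beta> where "\<forall>i. r$i > 0" "lagrangian_real q C e X y r \<xi> w \<beta> \<alpha> \<eta> lam \<le> B"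
    by blast
  then show "dual_fun q C e X y \<alpha> \<eta> lam \<le> ereal B"
    using dual_fun_le_lagrangian_real order_trans ereal_less_eq(3) by blast
qed

text \<open>A negative multiplier \<open>\<alpha>\<^sub>i\<close> lets \<open>r\<^sub>i \<rightarrow> \<infinity>\<close> drive the Lagrangian to \<open>-\<infinity>\<close>.\<close>

lemma lagrangian_real_unbounded_if_neg:
  fixes \<alpha> :: "real^'n"
  assumes q: "q > 0" and lam: "lam \<ge> 0" and neg: "\<alpha>$i < 0"
  shows "\<exists>r. (\<forall>j. r$j > 0) \<and> lagrangian_real q C e X y r 0 0 0 \<alpha> \<eta> lam \<le> B"
proof -
  define K where "K = (\<Sum>j\<in>UNIV. 1 + \<bar>\<alpha>$j\<bar>)"
  define t where "t = max 1 ((B - K) / \<alpha>$i)"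
  have t1: "t \<ge> 1" by (simp add: t_def)
  have "(B - K) / \<alpha>$i \<le> t" by (simp add: t_def)
  then have at: "\<alpha>$i * t \<le> B - K" using neg by (simp add: divide_le_eq mult.commute)
  define r :: "real^'n" where "r = (\<chi> j. if j = i then t else 1)"
  have term_le: "r$j powr (-q) + \<alpha>$j * r$j \<le> 1 + \<bar>\<alpha>$j\<bar> + (if j = i then \<alpha>$i * t else 0)" for j
  proof (cases "j = i")
    case True
    have "1 \<le> t powr q" using t1 q by (simp add: ge_one_powr_ge_zero)
    then have "t powr (-q) \<le> 1" by (simp add: powr_minus_divide divide_le_eq)
    then show ?thesis using True by (simp add: r_def)
  qed (simp add: r_def)
  have "(\<Sum>j\<in>UNIV. r$j powr (-q) + \<alpha>$j * r$j)
        \<le> (\<Sum>j\<in>UNIV. 1 + \<bar>\<alpha>$j\<bar> + (if j = i then \<alpha>$i * t else 0))"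
    by (rule sum_mono) (rule term_le)
  also have "\<dots> = K + \<alpha>$i * t" by (simp add: K_def sum.distrib)
  finally have "lagrangian_real q C e X y r 0 0 0 \<alpha> \<eta> lam \<le> K + \<alpha>$i * t - lam / 2"
    unfolding lagrangian_real_def by simp
  also have "\<dots> \<le> B" using at lam by simp
  finally show ?thesis using t1 by (intro exI[of _ r]) (simp add: r_def)
qed

lemma dual_fun_eq_MInfty:
  fixes X :: "real^'n^'d" and y e \<alpha> \<eta> :: "real^'n"
  assumes q: "q > 0" and lam: "lam \<ge> 0"
    and H: "(\<exists>i. \<alpha>$i < 0) \<or> (\<exists>i. \<eta>$i \<noteq> C*e$i - \<alpha>$i) \<or> y \<bullet> \<alpha> \<noteq> 0
            \<or> (lam = 0 \<and> Zmat X y *v \<alpha> \<noteq> 0)"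
  shows "dual_fun q C e X y \<alpha> \<eta> lam = -\<infinity>"
proof (rule dual_fun_eq_MInfty_if_unbounded)
  fix B
  define one :: "real^'n" where "one = (\<chi> j. 1)"
  have one_pos: "\<forall>i. one$i > 0" by (simp add: one_def)
  define L0 where "L0 = lagrangian_real q C e X y one 0 0 0 \<alpha> \<eta> lam"
  have at_one: "\<exists>r \<xi> w \<beta>. (\<forall>i. r$i > 0) \<and> lagrangian_real q C e X y r \<xi> w \<beta> \<alpha> \<eta> lam \<le> B"
    if "lagrangian_real q C e X y one \<xi> w \<beta> \<alpha> \<eta> lam = B" for \<xi> w \<beta>
    using that one_pos by (metis order_refl)
  let ?v = "Zmat X y *v \<alpha>"
  from H consider (neg) i where "\<alpha>$i < 0" | (xi) i where "\<eta>$i \<noteq> C*e$i - \<alpha>$i"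
    | (beta) "y \<bullet> \<alpha> \<noteq> 0" | (w) "lam = 0" "?v \<noteq> 0" by blast
  then show "\<exists>r \<xi> w \<beta>. (\<forall>i. r$i > 0) \<and> lagrangian_real q C e X y r \<xi> w \<beta> \<alpha> \<eta> lam \<le> B"
  proof cases
    case neg
    then show ?thesis using lagrangian_real_unbounded_if_neg[OF q lam] by blast
  next
    case xi
    define c where "c = C*e$i - \<alpha>$i - \<eta>$i"
    have c: "c \<noteq> 0" using xi by (simp add: c_def)
    define \<xi> :: "real^'n" where "\<xi> = (\<chi> j. if j = i then (B - L0) / c else 0)"
    have "lagrangian_real q C e X y one \<xi> 0 0 \<alpha> \<eta> lam = L0 + c * ((B - L0) / c)"
      unfolding L0_def lagrangian_real_def \<xi>_def c_def by (simp add: if_distrib cong: if_cong)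
    then show ?thesis using c by (intro at_one) simp
  next
    case beta
    have "lagrangian_real q C e X y one 0 0 ((L0 - B) / (y \<bullet> \<alpha>)) \<alpha> \<eta> lam
          = L0 - (L0 - B) / (y \<bullet> \<alpha>) * (y \<bullet> \<alpha>)"
      unfolding L0_def lagrangian_real_def by simp
    then show ?thesis using beta by (intro at_one) simp
  next
    case w
    have "lagrangian_real q C e X y one 0 (((L0 - B) / (?v \<bullet> ?v)) *\<^sub>R ?v) 0 \<alpha> \<eta> lam
          = L0 - (L0 - B) / (?v \<bullet> ?v) * (?v \<bullet> ?v)"
      unfolding L0_def lagrangian_real_def using w by simp
    then show ?thesis using w by (intro at_one) simp
  qed
qed

lemma dual_fun_le_neg_Psi:
  fixes X :: "real^'n^'d" and y e \<alpha> \<eta> :: "real^'n"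
  assumes q: "q > 0" and \<alpha>: "\<forall>i. \<alpha>$i \<ge> 0" and \<eta>: "\<forall>i. \<eta>$i = C*e$i - \<alpha>$i"
    and lam: "lam \<ge> 0" "lam = 0 \<longrightarrow> Zmat X y *v \<alpha> = 0"
  shows "dual_fun q C e X y \<alpha> \<eta> lam \<le> ereal (- Psi q X y \<alpha>)"
proof (rule ereal_le_epsilon2)
  fix \<epsilon> :: real assume \<epsilon>: "\<epsilon> > 0"
  define \<delta> where "\<delta> = \<epsilon> / real CARD('n)"
  have "\<delta> > 0" using \<epsilon> by (simp add: \<delta>_def)
  then have "\<forall>i. \<exists>t>0. t powr (-q) + \<alpha>$i*t \<le> kappa q * (\<alpha>$i) powr (q/(q+1)) + \<delta>"
    using ex_powr_add_mult_le_kappa[OF q] \<alpha> by blast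
  then obtain t where t: "\<forall>i. t i > 0 \<and> t i powr (-q) + \<alpha>$i * t i \<le> kappa q * (\<alpha>$i) powr (q/(q+1)) + \<delta>"
    by metis
  define r :: "real^'n" where "r = (\<chi> i. t i)"
  have r_pos: "\<forall>i. r$i > 0" using t by (simp add: r_def)
  obtain w where w: "- ((Zmat X y *v \<alpha>) \<bullet> w) + lam * ((norm w ^ 2 - 1) / 2) \<le> - norm (Zmat X y *v \<alpha>)"
    using ex_inner_penalty_le_neg_norm[OF lam] by blast
  have "(\<Sum>i\<in>UNIV. r$i powr (-q) + \<alpha>$i * r$i) \<le> (\<Sum>i\<in>UNIV. kappa q * (\<alpha>$i) powr (q/(q+1)) + \<delta>)"
    by (rule sum_mono) (use t in \<open>simp add: r_def\<close>)
  also have "\<dots> = kappa q * (\<Sum>i\<in>UNIV. (\<alpha>$i) powr (q/(q+1))) + \<epsilon>"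
    by (simp add: sum.distrib sum_distrib_left \<delta>_def)
  finally have L: "lagrangian_real q C e X y r 0 w 0 \<alpha> \<eta> lam \<le> - Psi q X y \<alpha> + \<epsilon>"
    using w unfolding lagrangian_real_def Psi_def by simp
  have "dual_fun q C e X y \<alpha> \<eta> lam \<le> ereal (lagrangian_real q C e X y r 0 w 0 \<alpha> \<eta> lam)"
    by (rule dual_fun_le_lagrangian_real[OF r_pos])
  also have "\<dots> \<le> ereal (- Psi q X y \<alpha>) + ereal \<epsilon>" using L by simp
  finally show "dual_fun q C e X y \<alpha> \<eta> lam \<le> ereal (- Psi q X y \<alpha>) + ereal \<epsilon>" .
qed

lemma neg_Psi_le_dual_fun:
  fixes X :: "real^'n^'d" and y e \<alpha> :: "real^'n"
  assumes q: "q > 0" and \<alpha>: "\<forall>i. \<alpha>$i \<ge> 0" and y\<alpha>: "y \<bullet> \<alpha> = 0"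
  shows "ereal (- Psi q X y \<alpha>) \<le> dual_fun q C e X y \<alpha> (\<chi> i. C*e$i - \<alpha>$i) (norm (Zmat X y *v \<alpha>))"
  unfolding dual_fun_def
proof (rule INF_greatest, clarify)
  fix r \<xi> :: "real^'n" and w :: "real^'d" and \<beta> :: real
  let ?v = "Zmat X y *v \<alpha>"
  show "ereal (- Psi q X y \<alpha>) \<le> lagrangian q C e X y r \<xi> w \<beta> \<alpha> (\<chi> i. C*e$i - \<alpha>$i) (norm ?v)"
  proof (cases "\<forall>i. r$i > 0")
    case False
    then obtain i where "r$i \<le> 0" by (meson not_less)
    then show ?thesis by (simp add: lagrangian_eq_PInfty)
  next
    case True
    have "kappa q * (\<Sum>i\<in>UNIV. (\<alpha>$i) powr (q/(q+1))) \<le> (\<Sum>i\<in>UNIV. r$i powr (-q) + \<alpha>$i * r$i)"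
      unfolding sum_distrib_left by (rule sum_mono) (use True \<alpha> kappa_mult_powr_le[OF q] in auto)
    then have "- Psi q X y \<alpha> \<le> lagrangian_real q C e X y r \<xi> w \<beta> \<alpha> (\<chi> i. C*e$i - \<alpha>$i) (norm ?v)"
      using neg_norm_le_inner_penalty[of ?v w] y\<alpha> unfolding lagrangian_real_def Psi_def by simp
    then show ?thesis by (simp add: lagrangian_eq_real[OF True])
  qed
qed

lemma dual_fun_le_if_feasible:
  fixes X :: "real^'n^'d" and y e \<alpha> \<eta> :: "real^'n"
  assumes q: "q > 0" and \<eta>: "\<forall>i. \<eta>$i \<ge> 0" and lam: "lam \<ge> 0"
  shows "dual_fun q C e X y \<alpha> \<eta> lam \<le> (if dual_feasible C e y \<alpha> then ereal (- Psi q X y \<alpha>) else -\<infinity>)"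
proof (cases "(\<forall>i. \<alpha>$i \<ge> 0) \<and> (\<forall>i. \<eta>$i = C*e$i - \<alpha>$i) \<and> y \<bullet> \<alpha> = 0
              \<and> (lam = 0 \<longrightarrow> Zmat X y *v \<alpha> = 0)")
  case True
  then have "dual_feasible C e y \<alpha>" using \<eta> by (auto simp: dual_feasible_def)
  moreover have "dual_fun q C e X y \<alpha> \<eta> lam \<le> ereal (- Psi q X y \<alpha>)"
    using True by (intro dual_fun_le_neg_Psi[OF q _ _ lam]) auto
  ultimately show ?thesis by simp
next
  case False
  then have "dual_fun q C e X y \<alpha> \<eta> lam = -\<infinity>"
    using False by (intro dual_fun_eq_MInfty[OF q lam]) (auto simp: not_le)
  then show ?thesis by simp
qed

lemma SUP_dual_fun_eq:
  fixes X :: "real^'n^'d" and y e \<alpha> :: "real^'n"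
  assumes q: "q > 0"
  shows "(SUP p \<in> {(\<eta>, lam). (\<forall>i. \<eta> $ i \<ge> 0) \<and> lam \<ge> 0}. dual_fun q C e X y \<alpha> (fst p) (snd p))
         = (if dual_feasible C e y \<alpha> then ereal (- Psi q X y \<alpha>) else -\<infinity>)"
proof (rule antisym)
  show "(SUP p \<in> {(\<eta>, lam). (\<forall>i. \<eta> $ i \<ge> 0) \<and> lam \<ge> 0}. dual_fun q C e X y \<alpha> (fst p) (snd p))
        \<le> (if dual_feasible C e y \<alpha> then ereal (- Psi q X y \<alpha>) else -\<infinity>)"
  proof (rule SUP_least, clarify)
    fix \<eta> :: "real^'n" and lam :: real
    assume "\<forall>i. \<eta> $ i \<ge> 0" "lam \<ge> 0"
    then show "dual_fun q C e X y \<alpha> (fst (\<eta>, lam)) (snd (\<eta>, lam))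
               \<le> (if dual_feasible C e y \<alpha> then ereal (- Psi q X y \<alpha>) else -\<infinity>)"
      unfolding fst_conv snd_conv by (rule dual_fun_le_if_feasible[OF q])
  qed
next
  show "(if dual_feasible C e y \<alpha> then ereal (- Psi q X y \<alpha>) else -\<infinity>)
        \<le> (SUP p \<in> {(\<eta>, lam). (\<forall>i. \<eta> $ i \<ge> 0) \<and> lam \<ge> 0}. dual_fun q C e X y \<alpha> (fst p) (snd p))"
  proof (cases "dual_feasible C e y \<alpha>")
    case True
    then have \<alpha>: "\<forall>i. \<alpha>$i \<ge> 0" and y\<alpha>: "y \<bullet> \<alpha> = 0"
      and mem: "(\<chi> i. C*e$i - \<alpha>$i, norm (Zmat X y *v \<alpha>)) \<in> {(\<eta>, lam). (\<forall>i. \<eta> $ i \<ge> 0) \<and> lam \<ge> 0}"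
      by (simp_all add: dual_feasible_def)
    have "ereal (- Psi q X y \<alpha>)
          \<le> (SUP p \<in> {(\<eta>, lam). (\<forall>i. \<eta> $ i \<ge> 0) \<and> lam \<ge> 0}. dual_fun q C e X y \<alpha> (fst p) (snd p))"
      by (rule SUP_upper2[OF mem]) (simp add: neg_Psi_le_dual_fun[OF q \<alpha> y\<alpha>])
    then show ?thesis by (simp only: if_P[OF True])
  next
    case False
    then show ?thesis by (simp only: if_not_P[OF False] if_False ereal_less_eq(2))
  qed
qed

theorem proposition1:
  fixes X :: "real^'n^'d" and y e :: "real^'n" and q C :: real
  assumes "\<forall>i. y $ i = 1 \<or> y $ i = -1"
    and "q > 0" and "C > 0"
    and "\<forall>i. e $ i > 0" and "infnorm e = 1"
  shows "(\<forall>\<alpha>. (SUP p \<in> {(\<eta>, lam). (\<forall>i. \<eta> $ i \<ge> 0) \<and> lam \<ge> 0}.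
                    dual_fun q C e X y \<alpha> (fst p) (snd p))
              = (if dual_feasible C e y \<alpha> then ereal (- Psi q X y \<alpha>) else -\<infinity>))
       \<and> (SUP p \<in> {(\<alpha>, \<eta>, lam). (\<forall>i. \<eta> $ i \<ge> 0) \<and> lam \<ge> 0}.
              dual_fun q C e X y (fst p) (fst (snd p)) (snd (snd p)))
         = - (INF \<alpha> \<in> {\<alpha>. dual_feasible C e y \<alpha>}. ereal (Psi q X y \<alpha>))"
proof
  let ?F = "{(\<eta>, lam). (\<forall>i. \<eta> $ i \<ge> 0) \<and> (lam::real) \<ge> 0}"
  note inner = SUP_dual_fun_eq[OF \<open>q > 0\<close>, of C e X y]
  then show "\<forall>\<alpha>. (SUP p \<in> ?F. dual_fun q C e X y \<alpha> (fst p) (snd p))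
            = (if dual_feasible C e y \<alpha> then ereal (- Psi q X y \<alpha>) else -\<infinity>)"
    by blast
  have product: "{(\<alpha>, \<eta>, lam). (\<forall>i. \<eta> $ i \<ge> 0) \<and> lam \<ge> 0} = UNIV \<times> ?F"
    by auto
  have "(SUP p \<in> {(\<alpha>, \<eta>, lam). (\<forall>i. \<eta> $ i \<ge> 0) \<and> lam \<ge> 0}.
                dual_fun q C e X y (fst p) (fst (snd p)) (snd (snd p)))
      = (SUP p \<in> UNIV \<times> ?F. dual_fun q C e X y (fst p) (fst (snd p)) (snd (snd p)))"
    unfolding product ..
  also have "\<dots> = (SUP \<alpha>. SUP p \<in> ?F. dual_fun q C e X y \<alpha> (fst p) (snd p))"
    by (rule SUP_Times_eq[of "\<lambda>\<alpha> p. dual_fun q C e X y \<alpha> (fst p) (snd p)"])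
  also have "\<dots> = (SUP \<alpha>. if dual_feasible C e y \<alpha> then - ereal (Psi q X y \<alpha>) else bot)"
    by (simp only: inner bot_ereal_def uminus_ereal.simps)
  also have "\<dots> = - (INF \<alpha> \<in> {\<alpha>. dual_feasible C e y \<alpha>}. ereal (Psi q X y \<alpha>))"
    unfolding SUP_if_bot_eq ereal_SUP_uminus_eq by simp
  finally show "(SUP p \<in> {(\<alpha>, \<eta>, lam). (\<forall>i. \<eta> $ i \<ge> 0) \<and> lam \<ge> 0}.
                  dual_fun q C e X y (fst p) (fst (snd p)) (snd (snd p)))
                = - (INF \<alpha> \<in> {\<alpha>. dual_feasible C e y \<alpha>}. ereal (Psi q X y \<alpha>))" .
qed

end
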